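(* (1) If $j\in\mathbb Z$ and $p,p'\in X_j$ are distinct points with $\pi_j(p)=\pi_j(p')$, then there is a vertical edge path in the $1$-skeleton of $X_j^{(1)}$ of combinatorial length at most $2$ containing $p$ and $p'$. (2) If $\sigma,\sigma'$ are $2$-cells of $X_j$ with $\pi_j(\sigma)\cap\pi_j(\sigma')\ne\emptyset$, then $\sigma\cap\sigma'\ne\emptyset$. (3) If $j\le j'$ are integers, $\hat\sigma$ is a $2$-cell of $Y_j$ and $\hat\sigma'$ a $2$-cell of $Y_{j'}$, and $\hat\pi^\infty(\hat\sigma)\cap\hat\pi^\infty(\hat\sigma')\ne\emptyset$, then $\hat\pi^{j'}(\hat\sigma)\cap\hat\pi^{j'}(\hat\sigma')\ne\emptyset$.
   Context: Standing construction ($n=2$). Fix an integer $L\ge100$, $m=4$, $m_v=3L$. For $j\in\mathbb Z$, $Y_j$ is the cell complex on $\mathbb R^2$ given by the tiling by rectangles $[am^{-j},(a+1)m^{-j}]\times[bm_v^{-j},(b+1)m_v^{-j}]$, $a,b\in\mathbb Z$; a $1$-cell of $Y_j$ is horizontal if it is a translate of $[0,m^{-j}]\times\{0\}$ and vertical if it is a translate of $\{0\}\times[0,m_v^{-j}]$. Let $\Phi(x,y)=(m^{-1}x,m_v^{-1}y)$. For $k,\ell\in\mathbb Z$, $i\in\{1,2,3\}$, let $a_{k,\ell,i}=\{k+\tfrac i4\}\times[(3\ell+i-1)m_v^{-1},(3\ell+i)m_v^{-1}]$. $\mathcal R$ is the equivalence relation on $\mathbb R^2$ generated by $p\sim p+(0,m_v^{-1})$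 for $p\in a_{k,\ell,i}$. $\Phi^j_*\mathcal R=\{(\Phi^jp,\Phi^jq):(p,q)\in\mathcal R\}$; $\mathcal R_j$ is generated by $\Phi^i_*\mathcal R$, $i<j$; $\mathcal R_\infty$ by all $\Phi^i_*\mathcal R$, $i\in\mathbb Z$. For $j\in\mathbb Z\cup\{\infty\}$, $X_j=\mathbb R^2/\mathcal R_j$, $\hat\pi^j$ the quotient map, $\pi_i^j:X_i\to X_j$ ($i\le j$) induced maps, $\pi_j=\pi_j^{j+1}$. $X_j$ carries the CW structure whose open cells are the images under $\hat\pi^j$ of open cells of $Y_j$; $X_j^{(k)}$ is the subdivision whose cells are images of cells of $Y_{j+k}$, and a $1$-cell of $X_j^{(k)}$ is vertical (horizontal) if it is the image of a vertical (horizontal) $1$-cell of $Y_{j+k}$. *)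

theory Defs
  imports Complex_Main
begin

definition mm :: real where "mm = 4"
definition mv :: "nat \<Rightarrow> real" where "mv L = 3 * real L"

definition PhiPow :: "nat \<Rightarrow> int \<Rightarrow> real \<times> real \<Rightarrow> real \<times> real" where
  "PhiPow L j p = (mm powr (- real_of_int j) * fst p, mv L powr (- real_of_int j) * snd p)"

definition aseg :: "nat \<Rightarrow> int \<Rightarrow> int \<Rightarrow> int \<Rightarrow> (real \<times> real) set" where
  "aseg L k l i = {(x,y). x = real_of_int k + real_of_int i / 4
      \<and> real_of_int (3*l + i - 1) / mv L \<le> y \<and> y \<le> real_of_int (3*l + i) / mv L}"

definition eqcl :: "('a \<times> 'a) set \<Rightarrow> ('a \<times> 'a) set" where
  "eqcl r = (r \<union> r\<inverse>)\<^sup>*"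

definition R0 :: "nat \<Rightarrow> ((real \<times> real) \<times> (real \<times> real)) set" where
  "R0 L = {(p, (fst p, snd p + 1 / mv L)) | p. \<exists>k l i. i \<in> {1,2,3} \<and> p \<in> aseg L k l i}"

definition Rbase :: "nat \<Rightarrow> ((real \<times> real) \<times> (real \<times> real)) set" where
  "Rbase L = eqcl (R0 L)"

definition pushR :: "nat \<Rightarrow> int \<Rightarrow> ((real \<times> real) \<times> (real \<times> real)) set
                       \<Rightarrow> ((real \<times> real) \<times> (real \<times> real)) set" where
  "pushR L i R = {(PhiPow L i p, PhiPow L i q) | p q. (p, q) \<in> R}"

definition Rj :: "nat \<Rightarrow> int \<Rightarrow> ((real \<times> real) \<times> (real \<times> real)) set" where
  "Rj L j = eqcl (\<Union>i\<in>{i. i < j}. pushR L i (Rbase L))"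

definition Rinf :: "nat \<Rightarrow> ((real \<times> real) \<times> (real \<times> real)) set" where
  "Rinf L = eqcl (\<Union>i. pushR L i (Rbase L))"

(* quotient map hat-pi for an equivalence relation: a point of R^2/R is its class *)
definition qmap :: "('a \<times> 'a) set \<Rightarrow> 'a \<Rightarrow> 'a set" where
  "qmap R p = R `` {p}"

definition Xsp :: "nat \<Rightarrow> int \<Rightarrow> (real \<times> real) set set" where
  "Xsp L j = UNIV // Rj L j"

(* pi_j = pi_j^{j+1} : X_j \<rightarrow> X_{j+1}, class C \<mapsto> class of C in R_{j+1} *)
definition pimap :: "nat \<Rightarrow> int \<Rightarrow> (real \<times> real) set \<Rightarrow> (real \<times> real) set" where
  "pimap L j C = Rj L (j + 1) `` C"

definition rectY :: "nat \<Rightarrow> int \<Rightarrow> int \<Rightarrow> int \<Rightarrow> (real \<times> real) set" where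
  "rectY L j a b = {(x,y).
      real_of_int a * mm powr (- real_of_int j) \<le> x \<and> x \<le> real_of_int (a+1) * mm powr (- real_of_int j)
    \<and> real_of_int b * mv L powr (- real_of_int j) \<le> y \<and> y \<le> real_of_int (b+1) * mv L powr (- real_of_int j)}"

definition cell2Y :: "nat \<Rightarrow> int \<Rightarrow> (real \<times> real) set \<Rightarrow> bool" where
  "cell2Y L j \<sigma> \<longleftrightarrow> (\<exists>a b. \<sigma> = rectY L j a b)"

definition cell2X :: "nat \<Rightarrow> int \<Rightarrow> (real \<times> real) set set \<Rightarrow> bool" where
  "cell2X L j \<sigma> \<longleftrightarrow> (\<exists>a b. \<sigma> = qmap (Rj L j) ` rectY L j a b)"

definition vedgeY :: "nat \<Rightarrow> int \<Rightarrow> int \<Rightarrow> int \<Rightarrow> (real \<times> real) set" where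
  "vedgeY L j a b = {(x,y). x = real_of_int a * mm powr (- real_of_int j)
    \<and> real_of_int b * mv L powr (- real_of_int j) \<le> y \<and> y \<le> real_of_int (b+1) * mv L powr (- real_of_int j)}"

definition vendsY :: "nat \<Rightarrow> int \<Rightarrow> int \<Rightarrow> int \<Rightarrow> (real \<times> real) set" where
  "vendsY L j a b = {(real_of_int a * mm powr (- real_of_int j), real_of_int b * mv L powr (- real_of_int j)),
                     (real_of_int a * mm powr (- real_of_int j), real_of_int (b+1) * mv L powr (- real_of_int j))}"

(* vertical closed 1-cell of X_j^{(1)} indexed by (a,b): image of a vertical 1-cell of Y_{j+1};
   its vertices are the images of the endpoints *)
definition vedgeX1 :: "nat \<Rightarrow> int \<Rightarrow> int \<Rightarrow> int \<Rightarrow> (real \<times> real) set set" where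
  "vedgeX1 L j a b = qmap (Rj L j) ` vedgeY L (j+1) a b"

definition vendsX1 :: "nat \<Rightarrow> int \<Rightarrow> int \<Rightarrow> int \<Rightarrow> (real \<times> real) set set" where
  "vendsX1 L j a b = qmap (Rj L j) ` vendsY L (j+1) a b"

(* S is contained in a vertical edge path of combinatorial length at most 2 in the
   1-skeleton of X_j^{(1)}: either a single vertical edge, or two vertical edges
   sharing a vertex (consecutive in the path). *)
definition vpath_le2 :: "nat \<Rightarrow> int \<Rightarrow> (real \<times> real) set set \<Rightarrow> bool" where
  "vpath_le2 L j S \<longleftrightarrow> (\<exists>a1 b1 a2 b2.
      ((a1, b1) = (a2, b2) \<or> vendsX1 L j a1 b1 \<inter> vendsX1 L j a2 b2 \<noteq> {})
    \<and> S \<subseteq> vedgeX1 L j a1 b1 \<union> vedgeX1 L j a2 b2)"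

end

theory Submission
  imports Defs "HOL-Library.Disjoint_Sets"
begin

text \<open>The relation \<open>\<Phi>\<^sup>i\<^sub>*\<R>\<close> only identifies points inside the blocks
  \<open>\<Phi>\<^sup>i(a\<^sub>k\<^sub>,\<^sub>l\<^sub>,\<^sub>c \<union> (a\<^sub>k\<^sub>,\<^sub>l\<^sub>,\<^sub>c + (0, m\<^sub>v\<^sup>-\<^sup>1)))\<close>, vertical segments of height
  \<open>2 m\<^sub>v\<^sup>-\<^sup>(\<^sup>i\<^sup>+\<^sup>1\<^sup>)\<close> on lines whose abscissae have 4-adic valuation exactly \<open>-(i + 1)\<close>.
  Coarsening \<open>\<Phi>\<^sup>i\<^sub>*\<R>\<close> to ``same block'', the generators of different scales move
  disjoint sets of points, so \<open>R\<^sub>j\<close> together with the block relations of all scales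
  \<open>i \<ge> j\<close> is already an equivalence relation.  Hence \<open>R\<^sub>j\<^sub>+\<^sub>1 \<subseteq> R\<^sub>j \<union> (blocks of scale j)\<close>
  and \<open>R\<^sub>\<infinity> \<subseteq> R\<^sub>j\<^sub>' \<union> (blocks of scales \<ge> j')\<close>.  A block of scale \<open>j\<close> is covered by two
  adjacent vertical edges of \<open>Y\<^sub>j\<^sub>+\<^sub>1\<close>, which gives (1); a block of scale \<open>i \<ge> j'\<close> is
  shorter than the cells of \<open>Y\<^sub>j\<^sub>'\<close>, whose horizontal lines contain those of \<open>Y\<^sub>j\<close>,
  so cells of \<open>Y\<^sub>j\<close> and \<open>Y\<^sub>j\<^sub>'\<close> meeting a common block intersect, which gives (2) and (3).\<close>

lemma equiv_eqcl: "equiv UNIV (eqcl r)"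
proof (rule equivI)
  have "sym (r \<union> r\<inverse>)" by (auto intro: symI)
  then show "sym (eqcl r)" unfolding eqcl_def by (rule sym_rtrancl)
qed (simp_all add: eqcl_def refl_rtrancl trans_rtrancl)

lemma subset_eqcl: "r \<subseteq> eqcl r"
  unfolding eqcl_def by auto

lemma eqcl_mono: "r \<subseteq> s \<Longrightarrow> eqcl r \<subseteq> eqcl s"
  unfolding eqcl_def by (intro rtrancl_mono) auto

lemma eqcl_least:
  assumes "refl W" "sym W" "trans W" "r \<subseteq> W"
  shows "eqcl r \<subseteq> W"
proof -
  have "r \<union> r\<inverse> \<subseteq> W" using assms(2,4) by (auto dest: symD)
  then have "eqcl r \<subseteq> W\<^sup>*" unfolding eqcl_def by (rule rtrancl_mono)
  also have "W\<^sup>* = W" using assms(1,3) by (rule rtranclp_ident_if_reflp_and_transp[to_set])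
  finally show ?thesis .
qed

lemma trans_Id_Un_UNION:
  assumes sym: "\<And>i. i \<in> A \<Longrightarrow> sym (E i)" and trans: "\<And>i. i \<in> A \<Longrightarrow> trans (E i)"
    and disj: "disjoint_family_on (\<lambda>i. Domain (E i - Id)) A"
  shows "trans (Id \<union> (\<Union>i\<in>A. E i))"
proof (rule transI)
  fix x y z assume xy: "(x, y) \<in> Id \<union> (\<Union>i\<in>A. E i)" and yz: "(y, z) \<in> Id \<union> (\<Union>i\<in>A. E i)"
  show "(x, z) \<in> Id \<union> (\<Union>i\<in>A. E i)"
  proof (cases "x = y \<or> y = z")
    case False
    with xy yz obtain i k where i: "i \<in> A" "(x, y) \<in> E i" and k: "k \<in> A" "(y, z) \<in> E k"
      by auto
    have "(y, x) \<in> E i" using sym[OF i(1)] i(2) by (rule symD)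
    with False k have "y \<in> Domain (E i - Id) \<inter> Domain (E k - Id)" by auto
    then have "i = k" using disjoint_family_onD[OF disj i(1) k(1)] by blast
    then show ?thesis using trans[OF i(1)] i k by (auto dest: transD)
  qed (use xy yz in auto)
qed

lemma eqcl_subset_Id_Un_UNION:
  assumes "\<And>i. i \<in> A \<Longrightarrow> sym (E i)" "\<And>i. i \<in> A \<Longrightarrow> trans (E i)"
    and "disjoint_family_on (\<lambda>i. Domain (E i - Id)) A"
    and "r \<subseteq> Id \<union> (\<Union>i\<in>A. E i)"
  shows "eqcl r \<subseteq> Id \<union> (\<Union>i\<in>A. E i)"
proof (rule eqcl_least)
  show "refl (Id \<union> (\<Union>i\<in>A. E i))" by (auto intro: reflI)
  show "sym (Id \<union> (\<Union>i\<in>A. E i))" using assms(1) by (auto intro!: symI dest: symD)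
  show "trans (Id \<union> (\<Union>i\<in>A. E i))" using assms(1-3) by (rule trans_Id_Un_UNION)
qed fact

lemma powr_minus_of_int_eq_power_mult:
  fixes b :: real
  assumes "0 \<le> b" "j \<le> j'"
  shows "b powr (- real_of_int j) = b ^ nat (j' - j) * b powr (- real_of_int j')"
proof (cases "b = 0")
  case False
  then have "0 < b" using assms(1) by simp
  have "b powr (- real_of_int j) = b powr (real (nat (j' - j)) + - real_of_int j')"
    using assms(2) by simp
  also have "\<dots> = b ^ nat (j' - j) * b powr (- real_of_int j')"
    by (simp only: powr_add powr_realpow[OF \<open>0 < b\<close>])
  finally show ?thesis .
qed simp

abbreviation hstep :: "int \<Rightarrow> real" where
  "hstep j \<equiv> mm powr (- real_of_int j)"

abbreviation vstep :: "nat \<Rightarrow> int \<Rightarrow> real" where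
  "vstep L j \<equiv> mv L powr (- real_of_int j)"

lemma hstep_succ: "hstep j = 4 * hstep (j + 1)"
proof -
  have "hstep j = mm ^ nat (j + 1 - j) * hstep (j + 1)"
    by (rule powr_minus_of_int_eq_power_mult) (simp_all add: mm_def)
  then show ?thesis by (simp add: mm_def)
qed

lemma vstep_succ: "vstep L j = mv L * vstep L (j + 1)"
proof -
  have "vstep L j = mv L ^ nat (j + 1 - j) * vstep L (j + 1)"
    by (rule powr_minus_of_int_eq_power_mult) (simp_all add: mv_def)
  then show ?thesis by simp
qed

lemma vstep_pos: "L > 0 \<Longrightarrow> vstep L j > 0"
  by (simp add: mv_def)

lemma vstep_antimono: "L > 0 \<Longrightarrow> j \<le> j' \<Longrightarrow> vstep L j' \<le> vstep L j"
  by (intro powr_mono) (auto simp: mv_def)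

text \<open>The segment \<open>\<Phi>\<^sup>i(a\<^sub>k\<^sub>,\<^sub>l\<^sub>,\<^sub>c \<union> (a\<^sub>k\<^sub>,\<^sub>l\<^sub>,\<^sub>c + (0, m\<^sub>v\<^sup>-\<^sup>1)))\<close>.\<close>
definition block :: "nat \<Rightarrow> int \<Rightarrow> int \<Rightarrow> int \<Rightarrow> int \<Rightarrow> (real \<times> real) set" where
  "block L i k l c = {(x, y). x = real_of_int (4 * k + c) * hstep (i + 1)
     \<and> real_of_int (3 * l + c - 1) * vstep L (i + 1) \<le> y \<and> y \<le> real_of_int (3 * l + c + 1) * vstep L (i + 1)}"

definition blocks :: "nat \<Rightarrow> int \<Rightarrow> (real \<times> real) set set" where
  "blocks L i = {block L i k l c | k l c. c \<in> {1, 2, 3}}"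

definition block_rel :: "nat \<Rightarrow> int \<Rightarrow> ((real \<times> real) \<times> (real \<times> real)) set" where
  "block_rel L i = Id \<union> (\<Union>B \<in> blocks L i. B \<times> B)"

lemma block_index_unique:
  assumes "L > 0" "c \<in> {1, 2, 3}" "c' \<in> {1, 2, 3}" "z \<in> block L i k l c" "z \<in> block L i k' l' c'"
  shows "(k, l, c) = (k', l', c')"
proof -
  have "real_of_int (4 * k + c) * hstep (i + 1) = real_of_int (4 * k' + c') * hstep (i + 1)"
    using assms(4,5) by (auto simp: block_def)
  then have "4 * k + c = 4 * k' + c'" by (simp add: mm_def)
  then have kc: "k = k' \<and> c = c'" using assms(2,3) by (auto; presburger)
  have "real_of_int (3 * l + c - 1) * vstep L (i + 1) \<le> real_of_int (3 * l' + c + 1) * vstep L (i + 1)"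
    "real_of_int (3 * l' + c - 1) * vstep L (i + 1) \<le> real_of_int (3 * l + c + 1) * vstep L (i + 1)"
    using assms(4,5) kc by (auto simp: block_def)
  then have "3 * l + c - 1 \<le> 3 * l' + c + 1" "3 * l' + c - 1 \<le> 3 * l + c + 1"
    using vstep_pos[OF assms(1)] by (simp_all only: mult_le_cancel_right_pos of_int_le_iff)
  then have "l = l'" by presburger
  then show ?thesis using kc by simp
qed

lemma disjoint_blocks:
  assumes "L > 0"
  shows "disjoint_family_on (\<lambda>B. B) (blocks L i)"
  unfolding disjoint_family_on_def
proof (intro ballI impI)
  fix B B' assume "B \<in> blocks L i" "B' \<in> blocks L i" "B \<noteq> B'"
  then obtain k l c k' l' c' where B: "B = block L i k l c" "c \<in> {1, 2, 3}"
    and B': "B' = block L i k' l' c'" "c' \<in> {1, 2, 3}"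
    unfolding blocks_def by blast
  show "B \<inter> B' = {}"
  proof (rule ccontr)
    assume "B \<inter> B' \<noteq> {}"
    then obtain z where "z \<in> block L i k l c" "z \<in> block L i k' l' c'" using B B' by blast
    then have "(k, l, c) = (k', l', c')" using block_index_unique[OF assms B(2) B'(2)] by blast
    then show False using B B' \<open>B \<noteq> B'\<close> by simp
  qed
qed

lemma equiv_block_rel:
  assumes "L > 0"
  shows "equiv UNIV (block_rel L i)"
proof (rule equivI)
  have dom: "Domain (B \<times> B - Id) \<subseteq> B" for B :: "(real \<times> real) set" by blast
  from disjoint_blocks[OF assms] have "disjoint_family_on (\<lambda>B. Domain (B \<times> B - Id)) (blocks L i)"
    by (rule disjoint_family_on_bisimulation) (use dom in blast)
  then show "trans (block_rel L i)"
    unfolding block_rel_def by (rule trans_Id_Un_UNION[rotated 2]) (simp_all add: sym_def trans_def)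
  show "refl (block_rel L i)" by (simp add: block_rel_def refl_on_def)
  show "sym (block_rel L i)" unfolding block_rel_def sym_def by blast
qed simp

text \<open>\<open>x\<close> has 4-adic valuation \<open>-(i + 1)\<close>: the abscissae of the vertical lines
  on which \<open>\<Phi>\<^sup>i\<^sub>*\<R>\<close> acts.\<close>
definition level :: "int \<Rightarrow> real \<Rightarrow> bool" where
  "level i x \<longleftrightarrow> (\<exists>a. \<not> 4 dvd a \<and> x = real_of_int a * hstep (i + 1))"

lemma not_level_less:
  assumes "level i x" "level i' x"
  shows "\<not> i < i'"
proof
  assume "i < i'"
  obtain a a' where a: "\<not> 4 dvd a" "x = real_of_int a * hstep (i + 1)"
    and a': "\<not> 4 dvd a'" "x = real_of_int a' * hstep (i' + 1)"
    using assms(1,2) unfolding level_def by blast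
  have "hstep (i + 1) = 4 ^ nat (i' - i) * hstep (i' + 1)"
    using powr_minus_of_int_eq_power_mult[of mm "i + 1" "i' + 1"] \<open>i < i'\<close> by (simp add: mm_def)
  then have "real_of_int a' * hstep (i' + 1) = real_of_int (a * 4 ^ nat (i' - i)) * hstep (i' + 1)"
    using a(2) a'(2) by simp
  then have "real_of_int a' = real_of_int (a * 4 ^ nat (i' - i))" by (simp add: mm_def)
  then have "a' = a * 4 ^ nat (i' - i)" by (simp only: of_int_eq_iff)
  moreover have "4 dvd (4 :: int) ^ nat (i' - i)" using \<open>i < i'\<close> by simp
  ultimately show False using a'(1) by simp
qed

lemma level_unique: "level i x \<Longrightarrow> level i' x \<Longrightarrow> i = i'"
  by (meson not_level_less linorder_neqE)

lemma Domain_block_rel: "Domain (block_rel L i - Id) \<subseteq> {z. level i (fst z)}"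
proof
  fix z assume "z \<in> Domain (block_rel L i - Id)"
  then obtain k l c where "z \<in> block L i k l c" "c \<in> {1, 2, 3}"
    unfolding block_rel_def blocks_def by blast
  moreover from \<open>c \<in> {1, 2, 3}\<close> have "\<not> 4 dvd (4 * k + c)" by (auto simp: dvd_add_right_iff)
  ultimately show "z \<in> {z. level i (fst z)}" unfolding level_def block_def by auto
qed

lemma disjoint_Domain_block_rel:
  "disjoint_family_on (\<lambda>i. Domain (block_rel L i - Id)) A"
  unfolding disjoint_family_on_def using Domain_block_rel level_unique by blast

lemma PhiPow_aseg_mem_block:
  assumes "L > 0" "p \<in> aseg L k l c"
  shows "PhiPow L i p \<in> block L i k l c" "PhiPow L i (fst p, snd p + 1 / mv L) \<in> block L i k l c"
proof -
  have mv: "mv L > 0" using assms(1) by (simp add: mv_def)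
  obtain x y where p: "p = (x, y)" by fastforce
  have x: "x = real_of_int k + real_of_int c / 4"
    and y: "real_of_int (3 * l + c - 1) \<le> mv L * y" "mv L * y \<le> real_of_int (3 * l + c)"
    using assms(2) mv unfolding aseg_def p by (auto simp: field_simps)
  have hx: "hstep i * x = real_of_int (4 * k + c) * hstep (i + 1)"
    unfolding x hstep_succ[of i] by (simp add: algebra_simps)
  have mem: "(hstep i * x, t * vstep L (i + 1)) \<in> block L i k l c"
    if "real_of_int (3 * l + c - 1) \<le> t" "t \<le> real_of_int (3 * l + c + 1)" for t
    using that vstep_pos[OF assms(1), of "i + 1"] unfolding block_def hx
    by (auto intro: mult_right_mono)
  have y1: "vstep L i * y = (mv L * y) * vstep L (i + 1)"
    unfolding vstep_succ[of L i] by (simp only: mult_ac)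
  have y2: "vstep L i * (y + 1 / mv L) = (mv L * y + 1) * vstep L (i + 1)"
    unfolding vstep_succ[of L i] using mv by (simp add: field_simps)
  show "PhiPow L i p \<in> block L i k l c"
    unfolding PhiPow_def p fst_conv snd_conv y1 using y by (intro mem) linarith+
  show "PhiPow L i (fst p, snd p + 1 / mv L) \<in> block L i k l c"
    unfolding PhiPow_def p fst_conv snd_conv y2 using y by (intro mem) linarith+
qed

lemma pushR_Rbase_subset_block_rel:
  assumes "L > 0"
  shows "pushR L i (Rbase L) \<subseteq> block_rel L i"
proof -
  have "Rbase L \<subseteq> inv_image (block_rel L i) (PhiPow L i)"
    unfolding Rbase_def
  proof (rule eqcl_least)
    show "refl (inv_image (block_rel L i) (PhiPow L i))"
      by (simp add: refl_on_def block_rel_def)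
    have "equiv UNIV (block_rel L i)" using assms by (rule equiv_block_rel)
    then show "sym (inv_image (block_rel L i) (PhiPow L i))" "trans (inv_image (block_rel L i) (PhiPow L i))"
      by (simp_all add: equiv_def sym_inv_image trans_inv_image)
    show "R0 L \<subseteq> inv_image (block_rel L i) (PhiPow L i)"
    proof
      fix pq assume "pq \<in> R0 L"
      then obtain p k l c where pq: "pq = (p, (fst p, snd p + 1 / mv L))" "c \<in> {1, 2, 3}" "p \<in> aseg L k l c"
        unfolding R0_def by blast
      then have "block L i k l c \<in> blocks L i" unfolding blocks_def by blast
      with PhiPow_aseg_mem_block[OF assms pq(3)] show "pq \<in> inv_image (block_rel L i) (PhiPow L i)"
        unfolding pq(1) block_rel_def by auto
    qed
  qed
  then show ?thesis unfolding pushR_def by auto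
qed

lemma equiv_Rj: "equiv UNIV (Rj L j)"
  unfolding Rj_def by (rule equiv_eqcl)

lemma Rj_refl: "(z, z) \<in> Rj L j"
  unfolding Rj_def eqcl_def by simp

lemma Rj_mono: "j \<le> j' \<Longrightarrow> Rj L j \<subseteq> Rj L j'"
  unfolding Rj_def by (intro eqcl_mono UN_mono) auto

lemma Rj_subset_block_rels:
  assumes "L > 0"
  shows "Rj L j \<subseteq> Id \<union> (\<Union>i\<in>{i. i < j}. block_rel L i)"
  unfolding Rj_def
proof (rule eqcl_subset_Id_Un_UNION)
  show "sym (block_rel L i)" "trans (block_rel L i)" for i
    using equiv_block_rel[OF assms] by (auto simp: equiv_def)
  show "(\<Union>i\<in>{i. i < j}. pushR L i (Rbase L)) \<subseteq> Id \<union> (\<Union>i\<in>{i. i < j}. block_rel L i)"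
    using pushR_Rbase_subset_block_rel[OF assms] by blast
qed (rule disjoint_Domain_block_rel)

lemma Domain_Rj:
  assumes "L > 0"
  shows "Domain (Rj L j - Id) \<subseteq> {z. \<exists>i<j. level i (fst z)}"
  using Rj_subset_block_rels[OF assms] Domain_block_rel by blast

lemma pushR_Rbase_subset_Rj: "i < j \<Longrightarrow> pushR L i (Rbase L) \<subseteq> Rj L j"
  unfolding Rj_def by (rule order_trans[OF _ subset_eqcl]) blast

lemma Domain_Rj_disjoint_block_rel:
  assumes "L > 0" "j \<le> i"
  shows "Domain (Rj L j - Id) \<inter> Domain (block_rel L i - Id) = {}"
proof (rule equals0I)
  fix z assume "z \<in> Domain (Rj L j - Id) \<inter> Domain (block_rel L i - Id)"
  then obtain i' where "i' < j" "level i' (fst z)" "level i (fst z)"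
    using Domain_Rj[OF assms(1)] Domain_block_rel by blast
  then have "i' = i" by (intro level_unique)
  with \<open>i' < j\<close> assms(2) show False by simp
qed

lemma eqcl_pushR_Rbase_subset:
  assumes "L > 0"
  shows "eqcl (\<Union>i\<in>A. pushR L i (Rbase L)) \<subseteq> Rj L j \<union> (\<Union>i\<in>{i\<in>A. j \<le> i}. block_rel L i)"
proof -
  define E where "E = case_option (Rj L j) (block_rel L)"
  define I where "I = insert None (Some ` {i\<in>A. j \<le> i})"
  have "Id \<subseteq> Rj L j" using Rj_refl by blast
  moreover have "(\<Union>k\<in>I. E k) = Rj L j \<union> (\<Union>i\<in>{i\<in>A. j \<le> i}. block_rel L i)"
    by (simp add: I_def E_def image_image)
  ultimately have union: "Id \<union> (\<Union>k\<in>I. E k) = Rj L j \<union> (\<Union>i\<in>{i\<in>A. j \<le> i}. block_rel L i)"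
    by blast
  have "eqcl (\<Union>i\<in>A. pushR L i (Rbase L)) \<subseteq> Id \<union> (\<Union>k\<in>I. E k)"
  proof (rule eqcl_subset_Id_Un_UNION)
    show "sym (E k)" "trans (E k)" for k
      using equiv_Rj[of L j] equiv_block_rel[OF assms] by (cases k; simp add: E_def equiv_def)+
    show "disjoint_family_on (\<lambda>k. Domain (E k - Id)) I"
      unfolding disjoint_family_on_def
    proof (intro ballI impI)
      fix m n assume "m \<in> I" "n \<in> I" "m \<noteq> n"
      have "Domain (block_rel L i - Id) \<inter> Domain (block_rel L i' - Id) = {}" if "i \<noteq> i'" for i i'
        using disjoint_Domain_block_rel[of L UNIV] that by (simp add: disjoint_family_on_def)
      with \<open>m \<in> I\<close> \<open>n \<in> I\<close> \<open>m \<noteq> n\<close> show "Domain (E m - Id) \<inter> Domain (E n - Id) = {}"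
        using Domain_Rj_disjoint_block_rel[OF assms]
        unfolding I_def E_def by (cases m; cases n) (simp_all add: Int_commute image_iff)
    qed
    show "(\<Union>i\<in>A. pushR L i (Rbase L)) \<subseteq> Id \<union> (\<Union>k\<in>I. E k)"
    proof (intro UN_least)
      fix i assume "i \<in> A"
      show "pushR L i (Rbase L) \<subseteq> Id \<union> (\<Union>k\<in>I. E k)"
      proof (cases "i < j")
        case True
        then have "pushR L i (Rbase L) \<subseteq> E None" unfolding E_def by (simp add: pushR_Rbase_subset_Rj)
        then show ?thesis unfolding I_def by blast
      next
        case False
        then have "pushR L i (Rbase L) \<subseteq> E (Some i)" "Some i \<in> I"
          using pushR_Rbase_subset_block_rel[OF assms] \<open>i \<in> A\<close> by (simp_all add: E_def I_def)
        then show ?thesis by blast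
      qed
    qed
  qed
  then show ?thesis unfolding union .
qed

lemma Rj_succ_subset:
  assumes "L > 0"
  shows "Rj L (j + 1) \<subseteq> Rj L j \<union> block_rel L j"
proof -
  have "{i \<in> {i. i < j + 1}. j \<le> i} = {j}" by auto
  then show ?thesis
    using eqcl_pushR_Rbase_subset[OF assms, of "{i. i < j + 1}" j] by (simp add: Rj_def[of L "j + 1"])
qed

lemma Rinf_subset:
  assumes "L > 0"
  shows "Rinf L \<subseteq> Rj L j \<union> (\<Union>i\<in>{i. j \<le> i}. block_rel L i)"
  using eqcl_pushR_Rbase_subset[OF assms, of UNIV j] by (simp add: Rinf_def)

lemma block_subset_vedgeY:
  "block L i k l c \<subseteq> vedgeY L (i + 1) (4 * k + c) (3 * l + c - 1) \<union> vedgeY L (i + 1) (4 * k + c) (3 * l + c)"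
proof
  fix z assume "z \<in> block L i k l c"
  then obtain x y where z: "z = (x, y)" "x = real_of_int (4 * k + c) * hstep (i + 1)"
    "real_of_int (3 * l + c - 1) * vstep L (i + 1) \<le> y" "y \<le> real_of_int (3 * l + c + 1) * vstep L (i + 1)"
    unfolding block_def by blast
  show "z \<in> vedgeY L (i + 1) (4 * k + c) (3 * l + c - 1) \<union> vedgeY L (i + 1) (4 * k + c) (3 * l + c)"
  proof (cases "y \<le> real_of_int (3 * l + c) * vstep L (i + 1)")
    case True
    then have "z \<in> vedgeY L (i + 1) (4 * k + c) (3 * l + c - 1)"
      using z unfolding vedgeY_def by simp
    then show ?thesis by blast
  next
    case False
    then have "z \<in> vedgeY L (i + 1) (4 * k + c) (3 * l + c)"
      using z unfolding vedgeY_def by (simp add: add.assoc)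
    then show ?thesis by blast
  qed
qed

lemma vpath_le2_if_subset_block:
  assumes "S \<subseteq> qmap (Rj L i) ` block L i k l c"
  shows "vpath_le2 L i S"
proof -
  let ?a = "4 * k + c" and ?b = "3 * l + c - 1"
  let ?e = "(real_of_int ?a * hstep (i + 1), real_of_int (?b + 1) * vstep L (i + 1))"
  have "?e \<in> vendsY L (i + 1) ?a ?b" "?e \<in> vendsY L (i + 1) ?a (?b + 1)"
    unfolding vendsY_def by simp_all
  then have "qmap (Rj L i) ?e \<in> vendsX1 L i ?a ?b \<inter> vendsX1 L i ?a (?b + 1)"
    unfolding vendsX1_def by blast
  moreover have "S \<subseteq> vedgeX1 L i ?a ?b \<union> vedgeX1 L i ?a (?b + 1)"
    using assms image_mono[OF block_subset_vedgeY[of L i k l c], of "qmap (Rj L i)"]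
    unfolding vedgeX1_def image_Un by simp
  ultimately show ?thesis unfolding vpath_le2_def by blast
qed

lemma grid_index_le:
  fixes u v :: int and h t t' :: real
  assumes "0 \<le> h" "real_of_int u * h \<le> t" "t' \<le> real_of_int v * h" "t - t' < h"
  shows "u \<le> v"
proof (rule ccontr)
  assume "\<not> u \<le> v"
  then have "real_of_int (v + 1) * h \<le> real_of_int u * h" using assms(1) by (intro mult_right_mono) simp_all
  then show False using assms(2-4) by (simp add: algebra_simps)
qed

lemma rectY_inter_nonempty_if_block:
  assumes L: "L > 0" and "j \<le> j'" "j' \<le> i"
    and z: "z \<in> rectY L j a b" "z \<in> block L i k l c"
    and w: "w \<in> rectY L j' a' b'" "w \<in> block L i k l c"
  shows "rectY L j a b \<inter> rectY L j' a' b' \<noteq> {}"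
proof -
  define h where "h = vstep L j'"
  define N where "N = (3 * int L) ^ nat (j' - j)"
  have h: "0 < h" unfolding h_def using L by (rule vstep_pos)
  have N: "0 \<le> N" unfolding N_def by simp
  have hj: "vstep L j = real_of_int N * h"
    using powr_minus_of_int_eq_power_mult[of "mv L" j j'] \<open>j \<le> j'\<close> by (simp add: N_def h_def mv_def)
  have "2 * vstep L (i + 1) < 3 * vstep L (i + 1)" using vstep_pos[OF L] by simp
  also have "\<dots> \<le> mv L * vstep L (i + 1)"
    using L vstep_pos[OF L, of "i + 1"] by (intro mult_right_mono) (simp_all add: mv_def)
  also have "\<dots> \<le> h" unfolding h_def vstep_succ[symmetric] using L \<open>j' \<le> i\<close> by (rule vstep_antimono)
  finally have "2 * vstep L (i + 1) < h" .
  moreover have "snd z - snd w \<le> 2 * vstep L (i + 1)" "snd w - snd z \<le> 2 * vstep L (i + 1)"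
    using z(2) w(2) unfolding block_def by (auto simp: algebra_simps)
  ultimately have close: "snd z - snd w < h" "snd w - snd z < h" by linarith+
  have x: "fst w = fst z" using z(2) w(2) unfolding block_def by auto
  have zb: "real_of_int (b * N) * h \<le> snd z" "snd z \<le> real_of_int ((b + 1) * N) * h"
    using z(1) unfolding rectY_def hj by (auto simp: mult.assoc)
  have wb: "real_of_int b' * h \<le> snd w" "snd w \<le> real_of_int (b' + 1) * h"
    using w(1) unfolding rectY_def h_def by auto
  have "b * N \<le> b' + 1" using h zb(1) wb(2) close(1) by (intro grid_index_le) simp_all
  moreover have "b' \<le> (b + 1) * N" using h wb(1) zb(2) close(2) by (intro grid_index_le) simp_all
  moreover have "b * N \<le> (b + 1) * N" using N by (simp add: algebra_simps)
  ultimately have "real_of_int (b * N) * h \<le> real_of_int ((b + 1) * N) * h"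
    "real_of_int b' * h \<le> real_of_int ((b + 1) * N) * h"
    "real_of_int (b * N) * h \<le> real_of_int (b' + 1) * h"
    using h by (simp_all only: mult_le_cancel_right_pos of_int_le_iff)
  then have "(fst z, max (real_of_int (b * N) * h) (real_of_int b' * h)) \<in> rectY L j a b \<inter> rectY L j' a' b'"
    using z(1) w(1) x unfolding rectY_def hj h_def[symmetric] by (auto simp: mult.assoc)
  then show ?thesis by blast
qed

lemma rectY_Rj_related_if_related:
  assumes "L > 0" "j \<le> j'" "z \<in> rectY L j a b" "w \<in> rectY L j' a' b'"
    and "(z, w) \<in> Rj L j' \<union> (\<Union>i\<in>{i. j' \<le> i}. block_rel L i)"
  shows "\<exists>u\<in>rectY L j a b. \<exists>u'\<in>rectY L j' a' b'. (u, u') \<in> Rj L j'"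
proof -
  consider "(z, w) \<in> Rj L j'" | "z = w"
    | i B where "j' \<le> i" "B \<in> blocks L i" "z \<in> B" "w \<in> B"
    using assms(5) unfolding block_rel_def by blast
  then show ?thesis
  proof cases
    case 3
    then obtain k l c where "z \<in> block L i k l c" "w \<in> block L i k l c" unfolding blocks_def by blast
    then have "rectY L j a b \<inter> rectY L j' a' b' \<noteq> {}"
      using rectY_inter_nonempty_if_block assms(1-4) \<open>j' \<le> i\<close> by blast
    then show ?thesis using Rj_refl by blast
  qed (use assms(3,4) Rj_refl in blast)+
qed

lemma qmap_eq_iff:
  assumes "equiv UNIV R"
  shows "qmap R z = qmap R w \<longleftrightarrow> (z, w) \<in> R"
  unfolding qmap_def using assms by (rule eq_equiv_class_iff) simp_all

lemma image_qmap_inter_nonempty_iff: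
  "equiv UNIV R \<Longrightarrow> qmap R ` A \<inter> qmap R ` B \<noteq> {} \<longleftrightarrow> (\<exists>z\<in>A. \<exists>w\<in>B. (z, w) \<in> R)"
  using qmap_eq_iff[of R] by blast

lemma pimap_qmap: "pimap L j (qmap (Rj L j) z) = qmap (Rj L (j + 1)) z"
  unfolding pimap_def qmap_def by (rule refines_equiv_class_eq2[OF Rj_mono equiv_Rj equiv_Rj]) simp

lemma vpath_le2_if_pimap_eq:
  assumes "L > 0" "p \<in> Xsp L j" "p' \<in> Xsp L j" "p \<noteq> p'" "pimap L j p = pimap L j p'"
  shows "vpath_le2 L j {p, p'}"
proof -
  obtain z z' where p: "p = qmap (Rj L j) z" "p' = qmap (Rj L j) z'"
    using assms(2,3) unfolding Xsp_def qmap_def by (auto elim!: quotientE)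
  have succ: "(z, z') \<in> Rj L (j + 1)"
    using assms(5) unfolding p pimap_qmap qmap_eq_iff[OF equiv_Rj] .
  have "(z, z') \<notin> Rj L j" using assms(4) unfolding p qmap_eq_iff[OF equiv_Rj] .
  moreover from this have "z \<noteq> z'" using Rj_refl by blast
  ultimately have "(z, z') \<in> block_rel L j - Id" using succ Rj_succ_subset[OF assms(1)] by blast
  then obtain k l c where "z \<in> block L j k l c" "z' \<in> block L j k l c"
    unfolding block_rel_def blocks_def by blast
  then show ?thesis unfolding p by (intro vpath_le2_if_subset_block) blast
qed

lemma cell2X_inter_nonempty_if_pimap:
  assumes "L > 0" "cell2X L j \<sigma>" "cell2X L j \<sigma>'" "pimap L j ` \<sigma> \<inter> pimap L j ` \<sigma>' \<noteq> {}"
  shows "\<sigma> \<inter> \<sigma>' \<noteq> {}"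
proof -
  obtain a b a' b' where \<sigma>: "\<sigma> = qmap (Rj L j) ` rectY L j a b" "\<sigma>' = qmap (Rj L j) ` rectY L j a' b'"
    using assms(2,3) unfolding cell2X_def by blast
  have pimap_image: "pimap L j ` qmap (Rj L j) ` S = qmap (Rj L (j + 1)) ` S" for S
    by (simp add: image_image pimap_qmap)
  then obtain z w where z: "z \<in> rectY L j a b" and w: "w \<in> rectY L j a' b'"
    and "(z, w) \<in> Rj L (j + 1)"
    using assms(4) unfolding \<sigma> pimap_image image_qmap_inter_nonempty_iff[OF equiv_Rj] by blast
  then have "(z, w) \<in> Rj L j \<union> (\<Union>i\<in>{i. j \<le> i}. block_rel L i)"
    using Rj_succ_subset[OF assms(1)] by blast
  with z w show ?thesis
    using rectY_Rj_related_if_related[OF assms(1) order_refl]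
    unfolding \<sigma> image_qmap_inter_nonempty_iff[OF equiv_Rj] by blast
qed

lemma image_qmap_Rj_inter_nonempty_if_Rinf:
  assumes "L > 0" "j \<le> j'" "cell2Y L j \<sigma>" "cell2Y L j' \<sigma>'"
    and "qmap (Rinf L) ` \<sigma> \<inter> qmap (Rinf L) ` \<sigma>' \<noteq> {}"
  shows "qmap (Rj L j') ` \<sigma> \<inter> qmap (Rj L j') ` \<sigma>' \<noteq> {}"
proof -
  obtain a b a' b' where \<sigma>: "\<sigma> = rectY L j a b" "\<sigma>' = rectY L j' a' b'"
    using assms(3,4) unfolding cell2Y_def by blast
  have Rinf: "equiv UNIV (Rinf L)" unfolding Rinf_def by (rule equiv_eqcl)
  obtain z w where z: "z \<in> \<sigma>" and w: "w \<in> \<sigma>'" and "(z, w) \<in> Rinf L"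
    using assms(5) unfolding image_qmap_inter_nonempty_iff[OF Rinf] by blast
  then have "(z, w) \<in> Rj L j' \<union> (\<Union>i\<in>{i. j' \<le> i}. block_rel L i)"
    using Rinf_subset[OF assms(1)] by blast
  with z w show ?thesis
    using rectY_Rj_related_if_related[OF assms(1,2)]
    unfolding \<sigma> image_qmap_inter_nonempty_iff[OF equiv_Rj] by blast
qed

theorem mainTheorem4:
  fixes L :: nat
  assumes "L \<ge> 100"
  shows
    "(\<forall>j p p'. p \<in> Xsp L j \<and> p' \<in> Xsp L j \<and> p \<noteq> p' \<and> pimap L j p = pimap L j p'
         \<longrightarrow> vpath_le2 L j {p, p'})
   \<and> (\<forall>j \<sigma> \<sigma>'. cell2X L j \<sigma> \<and> cell2X L j \<sigma>' \<and> pimap L j ` \<sigma> \<inter> pimap L j ` \<sigma>' \<noteq> {}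
         \<longrightarrow> \<sigma> \<inter> \<sigma>' \<noteq> {})
   \<and> (\<forall>j j' \<sigma> \<sigma>'. j \<le> j' \<and> cell2Y L j \<sigma> \<and> cell2Y L j' \<sigma>'
         \<and> qmap (Rinf L) ` \<sigma> \<inter> qmap (Rinf L) ` \<sigma>' \<noteq> {}
         \<longrightarrow> qmap (Rj L j') ` \<sigma> \<inter> qmap (Rj L j') ` \<sigma>' \<noteq> {})"
proof (intro conjI allI impI; elim conjE)
  have L: "L > 0" using assms by simp
  show "vpath_le2 L j {p, p'}"
    if "p \<in> Xsp L j" "p' \<in> Xsp L j" "p \<noteq> p'" "pimap L j p = pimap L j p'" for j p p'
    using vpath_le2_if_pimap_eq[OF L that] .
  show "\<sigma> \<inter> \<sigma>' \<noteq> {}"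
    if "cell2X L j \<sigma>" "cell2X L j \<sigma>'" "pimap L j ` \<sigma> \<inter> pimap L j ` \<sigma>' \<noteq> {}" for j \<sigma> \<sigma>'
    using cell2X_inter_nonempty_if_pimap[OF L that] .
  show "qmap (Rj L j') ` \<sigma> \<inter> qmap (Rj L j') ` \<sigma>' \<noteq> {}"
    if "j \<le> j'" "cell2Y L j \<sigma>" "cell2Y L j' \<sigma>'"
      "qmap (Rinf L) ` \<sigma> \<inter> qmap (Rinf L) ` \<sigma>' \<noteq> {}" for j j' \<sigma> \<sigma>'
    using image_qmap_Rj_inter_nonempty_if_Rinf[OF L that] .
qed

end
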